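(* For every $n\ge 1$, $s(n)>0$ if and only if there exist an integer $j\ge 2$ and nonnegative integers $t_2,t_3,\dots,t_j$ with $t_j\ge 1$ such that $$p_n = 2^{t_2}3^{t_3}\cdots j^{t_j} + t_2+2t_3+\dots+(j-1)t_j+3 .$$ (That is: either $p_n=2^{t_2}+t_2+3$ for some $t_2\ge1$, or $p_n=2^{t_2}3^{t_3}+t_2+2t_3+3$ for some $t_2\ge0,t_3\ge1$, or $p_n=2^{t_2}3^{t_3}4^{t_4}+t_2+2t_3+3t_4+3$ for some $t_2,t_3\ge0,t_4\ge1$, and so on.)
   Context: $p_n$ denotes the $n$-th prime ($p_1=2$). For an integer $k\ge 3$, say that a positive integer $m$ is represented by $F_k$ if there exist integers $1\le x_1\le x_2\le\dots\le x_k$ with $x_1x_2\cdots x_k+x_1+\dots+x_k=m$. For $n\ge 1$, $s(n)$ is the smallest integer $k\ge 3$ such that $p_n+k-3$ is represented by $F_k$, and $s(n)=0$ if no such $k\ge 3$ exists. *)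

theory Defs
  imports "HOL-Computational_Algebra.Primes" "HOL-Library.Infinite_Set"
begin

text \<open>The n-th prime, 1-indexed: nth_prime 1 = 2.\<close>
definition nth_prime :: "nat \<Rightarrow> nat" where
  "nth_prime n = enumerate {p::nat. prime p} (n - 1)"

definition represented_by_F :: "nat \<Rightarrow> nat \<Rightarrow> bool" where
  "represented_by_F k m \<longleftrightarrow>
     (\<exists>xs::nat list. length xs = k \<and> sorted xs \<and> (\<forall>x\<in>set xs. 1 \<le> x) \<and>
        prod_list xs + sum_list xs = m)"

definition s :: "nat \<Rightarrow> nat" where
  "s n = (if \<exists>k\<ge>3. represented_by_F k (nth_prime n + k - 3)
          then (LEAST k. 3 \<le> k \<and> represented_by_F k (nth_prime n + k - 3))
          else 0)"

end

theory Submission imports Defs "HOL-Library.Multiset" begin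

text \<open>Forgetting the order of the factors, a representation of \<open>m\<close> by \<open>F\<^sub>k\<close> is a
  multiset of \<open>k\<close> positive integers, and every entry \<open>1\<close> raises both \<open>m\<close> and \<open>k\<close> by one.
  Hence \<open>p + k - 3\<close> is represented by some \<open>F\<^sub>k\<close>, \<open>k \<ge> 3\<close>, iff
  \<open>p = \<Prod>M + (\<Sum>x\<in>M. x - 1) + 3\<close> for a multiset \<open>M\<close> of integers \<open>\<ge> 2\<close>
  (conversely, pad \<open>M\<close> with three ones). Recording the multiplicity \<open>t\<^sub>i\<close> of each
  \<open>i \<le> j = max M\<close> gives the stated form; \<open>M\<close> is nonempty since \<open>M = {#}\<close> means \<open>p = 4\<close>.\<close>

lemma prod_mset_eq_prod_power_count:
  fixes M :: "'a::comm_monoid_mult multiset"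
  assumes "finite S" "set_mset M \<subseteq> S"
  shows "prod_mset M = (\<Prod>i\<in>S. i ^ count M i)"
  unfolding prod_mset_multiplicity using assms
  by (intro prod.mono_neutral_left) (auto simp: not_in_iff)

lemma sum_mset_image_eq_sum_count:
  fixes f :: "'a \<Rightarrow> 'b::comm_semiring_1"
  assumes "finite S" "set_mset M \<subseteq> S"
  shows "(\<Sum>x\<in>#M. f x) = (\<Sum>i\<in>S. of_nat (count M i) * f i)"
  using assms(2)
proof (induction M)
  case (add x M)
  have "(\<Sum>i\<in>S. of_nat (count (add_mset x M) i) * f i)
          = (\<Sum>i\<in>S. of_nat (count M i) * f i + (if i = x then f x else 0))"
    by (intro sum.cong) (auto simp: algebra_simps)
  also have "\<dots> = (\<Sum>i\<in>S. of_nat (count M i) * f i) + f x"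
    using add.prems assms(1) by (simp add: sum.distrib)
  finally show ?case
    using add by (simp add: add.commute)
qed simp

lemma count_sum_replicate_mset:
  assumes "finite S"
  shows "count (\<Sum>i\<in>S. replicate_mset (t i) i) x = (if x \<in> S then t x else 0)"
  using assms by (simp add: count_sum sum.delta')

lemma sum_mset_eq_sum_pred_plus_size:
  fixes M :: "nat multiset"
  assumes "\<forall>x\<in>#M. 1 \<le> x"
  shows "sum_mset M = (\<Sum>x\<in>#M. x - 1) + size M"
  using assms by (induction M) auto

lemma represented_by_F_iff_mset:
  "represented_by_F k m \<longleftrightarrow>
     (\<exists>X. size X = k \<and> (\<forall>x\<in>#X. 1 \<le> x) \<and> prod_mset X + sum_mset X = m)"
proof
  assume "represented_by_F k m"
  then obtain xs where "length xs = k" "\<forall>x\<in>set xs. 1 \<le> x" "prod_list xs + sum_list xs = m"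
    unfolding represented_by_F_def by blast
  then show "\<exists>X. size X = k \<and> (\<forall>x\<in>#X. 1 \<le> x) \<and> prod_mset X + sum_mset X = m"
    by (intro exI[of _ "mset xs"]) (simp add: prod_mset_prod_list sum_mset_sum_list)
next
  assume "\<exists>X. size X = k \<and> (\<forall>x\<in>#X. 1 \<le> x) \<and> prod_mset X + sum_mset X = m"
  then obtain X where "size X = k" "\<forall>x\<in>#X. 1 \<le> x" "prod_mset X + sum_mset X = m"
    by blast
  then show "represented_by_F k m"
    unfolding represented_by_F_def
    by (intro exI[of _ "sorted_list_of_multiset X"])
       (metis mset_sorted_list_of_multiset prod_mset_prod_list sum_mset_sum_list size_mset
          set_sorted_list_of_multiset sorted_sorted_list_of_multiset)
qed

lemma shifted_represented_by_F_iff: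
  "(\<exists>k\<ge>3. represented_by_F k (p + k - 3)) \<longleftrightarrow>
     (\<exists>M. (\<forall>x\<in>#M. 2 \<le> x) \<and> p = prod_mset M + (\<Sum>x\<in>#M. x - 1) + 3)"
proof
  assume "\<exists>k\<ge>3. represented_by_F k (p + k - 3)"
  then obtain k X where k: "k \<ge> 3" and size_X: "size X = k" and pos: "\<forall>x\<in>#X. 1 \<le> x"
    and X_eq: "prod_mset X + sum_mset X = p + k - 3"
    unfolding represented_by_F_iff_mset by blast
  define M where "M = filter_mset (\<lambda>x. 2 \<le> x) X"
  define A where "A = filter_mset (\<lambda>x. \<not> 2 \<le> x) X"
  have X_split: "X = M + A"
    unfolding M_def A_def by simp
  have "set_mset A \<subseteq> {1}"
    using pos unfolding A_def by force
  then obtain a where "A = replicate_mset a 1"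
    by (blast dest: set_mset_subset_singletonD)
  then have "prod_mset X = prod_mset M" "sum_mset X = sum_mset M + size A"
    using X_split by simp_all
  moreover have "k = size M + size A"
    using size_X X_split by simp
  moreover have "sum_mset M = (\<Sum>x\<in>#M. x - 1) + size M"
    by (rule sum_mset_eq_sum_pred_plus_size) (simp add: M_def)
  ultimately have "p = prod_mset M + (\<Sum>x\<in>#M. x - 1) + 3"
    using X_eq k by linarith
  moreover have "\<forall>x\<in>#M. 2 \<le> x"
    by (simp add: M_def)
  ultimately show "\<exists>M. (\<forall>x\<in>#M. 2 \<le> x) \<and> p = prod_mset M + (\<Sum>x\<in>#M. x - 1) + 3"
    by blast
next
  assume "\<exists>M. (\<forall>x\<in>#M. 2 \<le> x) \<and> p = prod_mset M + (\<Sum>x\<in>#M. x - 1) + 3"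
  then obtain M where M_ge2: "\<forall>x\<in>#M. 2 \<le> x" and p_eq: "p = prod_mset M + (\<Sum>x\<in>#M. x - 1) + 3"
    by blast
  define X where "X = M + replicate_mset 3 1"
  have "sum_mset M = (\<Sum>x\<in>#M. x - 1) + size M"
    using M_ge2 by (intro sum_mset_eq_sum_pred_plus_size) auto
  moreover have "prod_mset X = prod_mset M" "sum_mset X = sum_mset M + 3" "size X = size M + 3"
    by (simp_all add: X_def)
  ultimately have X_eq: "prod_mset X + sum_mset X = p + size X - 3"
    using p_eq by linarith
  have "\<forall>x\<in>#X. 1 \<le> x"
    using M_ge2 unfolding X_def by auto
  with X_eq have "represented_by_F (size X) (p + size X - 3)"
    unfolding represented_by_F_iff_mset by (intro exI[of _ X]) simp
  moreover have "size X \<ge> 3"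
    by (simp add: X_def)
  ultimately show "\<exists>k\<ge>3. represented_by_F k (p + k - 3)"
    by (intro exI[of _ "size X"]) simp
qed

lemma prod_sum_mset_eq_exponent_form:
  fixes M :: "nat multiset"
  assumes "set_mset M \<subseteq> {2..j}"
  shows "prod_mset M + (\<Sum>x\<in>#M. x - 1) =
           (\<Prod>i=2..j. i ^ count M i) + (\<Sum>i=2..j. (i - 1) * count M i)"
  using prod_mset_eq_prod_power_count[OF _ assms]
    sum_mset_image_eq_sum_count[OF _ assms, of "\<lambda>x. x - 1"]
  by (simp add: mult.commute)

lemma shifted_represented_by_F_iff_exponents:
  assumes "p \<noteq> 4"
  shows "(\<exists>k\<ge>3. represented_by_F k (p + k - 3)) \<longleftrightarrow>
    (\<exists>(j::nat) (t::nat \<Rightarrow> nat). j \<ge> 2 \<and> t j \<ge> 1 \<and>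
       p = (\<Prod>i=2..j. i ^ t i) + (\<Sum>i=2..j. (i - 1) * t i) + 3)"
  unfolding shifted_represented_by_F_iff
proof
  assume "\<exists>M. (\<forall>x\<in>#M. 2 \<le> x) \<and> p = prod_mset M + (\<Sum>x\<in>#M. x - 1) + 3"
  then obtain M :: "nat multiset" where
    M_ge2: "\<forall>x\<in>#M. 2 \<le> x" and p_eq: "p = prod_mset M + (\<Sum>x\<in>#M. x - 1) + 3"
    by blast
  have "M \<noteq> {#}"
    using p_eq assms by auto
  define j where "j = Max (set_mset M)"
  have j_in: "j \<in># M"
    unfolding j_def using \<open>M \<noteq> {#}\<close> by simp
  have M_sub: "set_mset M \<subseteq> {2..j}"
    using M_ge2 unfolding j_def by auto
  show "\<exists>j t. 2 \<le> j \<and> 1 \<le> t j \<and> p = (\<Prod>i=2..j. i ^ t i) + (\<Sum>i=2..j. (i - 1) * t i) + 3"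
    using j_in M_ge2 p_eq prod_sum_mset_eq_exponent_form[OF M_sub]
    by (intro exI[of _ j] exI[of _ "count M"]) (simp add: Suc_le_eq)
next
  assume "\<exists>j t. 2 \<le> j \<and> 1 \<le> t j \<and> p = (\<Prod>i=2..j. i ^ t i) + (\<Sum>i=2..j. (i - 1) * t i) + 3"
  then obtain j :: nat and t :: "nat \<Rightarrow> nat"
    where p_eq: "p = (\<Prod>i=2..j. i ^ t i) + (\<Sum>i=2..j. (i - 1) * t i) + 3"
    by blast
  define M where "M = (\<Sum>i\<in>{2..j}. replicate_mset (t i) i)"
  have count_M: "count M i = (if i \<in> {2..j} then t i else 0)" for i
    unfolding M_def by (simp add: count_sum_replicate_mset)
  have M_sub: "set_mset M \<subseteq> {2..j}"
    using count_M by (metis count_eq_zero_iff subsetI)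
  have "prod_mset M + (\<Sum>x\<in>#M. x - 1) = (\<Prod>i=2..j. i ^ t i) + (\<Sum>i=2..j. (i - 1) * t i)"
    unfolding prod_sum_mset_eq_exponent_form[OF M_sub] using count_M by simp
  then show "\<exists>M. (\<forall>x\<in>#M. 2 \<le> x) \<and> p = prod_mset M + (\<Sum>x\<in>#M. x - 1) + 3"
    using M_sub p_eq by (intro exI[of _ M]) auto
qed

lemma s_pos_iff: "s n > 0 \<longleftrightarrow> (\<exists>k\<ge>3. represented_by_F k (nth_prime n + k - 3))"
proof
  assume ex: "\<exists>k\<ge>3. represented_by_F k (nth_prime n + k - 3)"
  then have "3 \<le> (LEAST k. 3 \<le> k \<and> represented_by_F k (nth_prime n + k - 3))"
    by (metis (mono_tags, lifting) LeastI_ex)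
  with ex show "s n > 0"
    unfolding s_def by simp
qed (auto simp: s_def split: if_splits)

lemma prime_nth_prime: "prime (nth_prime n)"
  unfolding nth_prime_def using enumerate_in_set[OF primes_infinite] by blast

theorem proposition5:
  fixes n :: nat
  assumes "n \<ge> 1"
  shows "s n > 0 \<longleftrightarrow>
    (\<exists>(j::nat) (t::nat \<Rightarrow> nat). j \<ge> 2 \<and> t j \<ge> 1 \<and>
       nth_prime n = (\<Prod>i=2..j. i ^ t i) + (\<Sum>i=2..j. (i - 1) * t i) + 3)"
proof -
  have "nth_prime n \<noteq> 4"
    using prime_odd_nat[OF prime_nth_prime, of n] by auto
  then show ?thesis
    unfolding s_pos_iff by (rule shifted_represented_by_F_iff_exponents)
qed

end
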